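(* Let $(\rho,\mathbf{u},\Sigma)$ be a smooth solution on $\Omega\subset\mathbb{R}^d$, with $\rho>0$ and $\alpha>0$, of the pressureless IGR system $$\partial_t\rho+\nabla\cdot(\rho\mathbf{u})=0,\quad \partial_t(\rho\mathbf{u})+\nabla\cdot(\rho\mathbf{u}\otimes\mathbf{u}+\Sigma\,\mathbb{I})=0,$$ $$\rho^{-1}\Sigma-\alpha\nabla\cdot(\rho^{-1}\nabla\Sigma)=\alpha\big(\mathrm{tr}^2(\nabla\mathbf{u})+\mathrm{tr}((\nabla\mathbf{u})^2)\big).$$ Then $K_E=\frac12\rho\big(|\mathbf{u}|^2+\alpha(\nabla\cdot\mathbf{u})^2\big)$ satisfies $$\partial_t K_E+\nabla\cdot\big((K_E+\Sigma)\mathbf{u}\big)=\alpha\,\rho\,(\nabla\cdot\mathbf{u})^3.$$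
   Context: $\nabla\mathbf{u}$ is the velocity gradient matrix, $\mathrm{tr}^2(\cdot)=(\mathrm{tr}(\cdot))^2$, $\mathbb{I}$ the identity matrix, and $(\nabla\cdot(\mathbf{a}\otimes\mathbf{b}))_i=\sum_j\partial_j(a_ib_j)$. *)

theory Defs
  imports "HOL-Analysis.Analysis"
begin

definition pdir :: "'a::real_normed_vector \<Rightarrow> ('a \<Rightarrow> real) \<Rightarrow> 'a \<Rightarrow> real" where
  "pdir v g z = deriv (\<lambda>s. g (z + s *\<^sub>R v)) 0"

definition smooth_on :: "'a::euclidean_space set \<Rightarrow> ('a \<Rightarrow> real) \<Rightarrow> bool" where
  "smooth_on S g \<longleftrightarrow>
     (\<forall>vs. set vs \<subseteq> Basis \<longrightarrow>
        continuous_on S (foldr pdir vs g) \<and>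
        (\<forall>z\<in>S. \<forall>v\<in>Basis. (\<lambda>s. foldr pdir vs g (z + s *\<^sub>R v)) differentiable (at 0)))"

definition dt :: "(real \<times> (real^'n) \<Rightarrow> real) \<Rightarrow> real \<times> (real^'n) \<Rightarrow> real" where
  "dt f z = pdir (1, 0) f z"

definition dx :: "'n::finite \<Rightarrow> (real \<times> (real^'n) \<Rightarrow> real) \<Rightarrow> real \<times> (real^'n) \<Rightarrow> real" where
  "dx j f z = pdir (0, axis j 1) f z"

definition divg :: "(real \<times> (real^'n) \<Rightarrow> real^'n) \<Rightarrow> real \<times> (real^'n) \<Rightarrow> real" where
  "divg u z = (\<Sum>j\<in>UNIV. dx j (\<lambda>w. u w $ j) z)"

end

theory Submission
  imports Defs
begin

text \<open>Using mass conservation, the momentum equation is equivalent to the convective form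
  \<open>D\<^sub>t u\<^sub>i = -\<partial>\<^sub>i\<Sigma> / \<rho>\<close>, where \<open>D\<^sub>t = \<partial>\<^sub>t + u\<cdot>\<nabla>\<close> is the material derivative. Taking the
  divergence and using the symmetry of second derivatives gives
  \<open>D\<^sub>t(\<nabla>\<cdot>u) = -tr((\<nabla>u)\<^sup>2) - \<nabla>\<cdot>(\<rho>\<^sup>-\<^sup>1\<nabla>\<Sigma>)\<close>, which the IGR equation turns into
  \<open>D\<^sub>t(\<nabla>\<cdot>u) = (\<nabla>\<cdot>u)\<^sup>2 - \<Sigma>/(\<alpha>\<rho>)\<close>. Writing
  \<open>K\<^sub>E = \<rho> q\<close> with \<open>q = (|u|\<^sup>2 + \<alpha>(\<nabla>\<cdot>u)\<^sup>2)/2\<close>, mass conservation again gives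
  \<open>\<partial>\<^sub>tK\<^sub>E + \<nabla>\<cdot>(K\<^sub>E u) = \<rho> D\<^sub>tq = -u\<cdot>\<nabla>\<Sigma> + \<alpha>\<rho>(\<nabla>\<cdot>u)\<^sup>3 - \<Sigma> \<nabla>\<cdot>u\<close>, and the remaining flux
  \<open>\<nabla>\<cdot>(\<Sigma>u) = u\<cdot>\<nabla>\<Sigma> + \<Sigma> \<nabla>\<cdot>u\<close> cancels the last and first terms.\<close>

definition pdir_differentiable :: "'a::real_normed_vector \<Rightarrow> ('a \<Rightarrow> real) \<Rightarrow> 'a \<Rightarrow> bool" where
  "pdir_differentiable v g z \<longleftrightarrow> (\<lambda>s. g (z + s *\<^sub>R v)) differentiable (at 0)"

lemma has_real_derivative_pdir:
  "pdir_differentiable v g z \<Longrightarrow> ((\<lambda>s. g (z + s *\<^sub>R v)) has_real_derivative pdir v g z) (at 0)"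
  unfolding pdir_differentiable_def pdir_def using DERIV_deriv_iff_real_differentiable by blast

lemma pdir_differentiableI:
  "((\<lambda>s. g (z + s *\<^sub>R v)) has_real_derivative D) (at 0) \<Longrightarrow> pdir_differentiable v g z"
  unfolding pdir_differentiable_def using real_differentiable_def by blast

lemma pdir_eqI: "((\<lambda>s. g (z + s *\<^sub>R v)) has_real_derivative D) (at 0) \<Longrightarrow> pdir v g z = D"
  unfolding pdir_def by (rule DERIV_imp_deriv)

lemma pdir_differentiable_const [simp]: "pdir_differentiable v (\<lambda>w. c) z"
  by (rule pdir_differentiableI[of _ _ _ 0]) simp

lemma pdir_const [simp]: "pdir v (\<lambda>w. c) z = 0"
  by (rule pdir_eqI) simp

lemma pdir_minus [simp]: "pdir_differentiable v f z \<Longrightarrow> pdir v (\<lambda>w. - f w) z = - pdir v f z"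
  by (rule pdir_eqI, rule DERIV_minus[OF has_real_derivative_pdir])

lemma pdir_differentiable_add [simp]:
  "pdir_differentiable v f z \<Longrightarrow> pdir_differentiable v g z \<Longrightarrow> pdir_differentiable v (\<lambda>w. f w + g w) z"
  by (rule pdir_differentiableI, rule DERIV_add[OF has_real_derivative_pdir has_real_derivative_pdir])

lemma pdir_add [simp]:
  "pdir_differentiable v f z \<Longrightarrow> pdir_differentiable v g z \<Longrightarrow>
    pdir v (\<lambda>w. f w + g w) z = pdir v f z + pdir v g z"
  by (rule pdir_eqI, rule DERIV_add[OF has_real_derivative_pdir has_real_derivative_pdir])

lemma pdir_differentiable_mult [simp]:
  "pdir_differentiable v f z \<Longrightarrow> pdir_differentiable v g z \<Longrightarrow> pdir_differentiable v (\<lambda>w. f w * g w) z"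
  by (rule pdir_differentiableI, rule DERIV_mult[OF has_real_derivative_pdir has_real_derivative_pdir])

lemma pdir_mult [simp]:
  assumes "pdir_differentiable v f z" "pdir_differentiable v g z"
  shows "pdir v (\<lambda>w. f w * g w) z = pdir v f z * g z + f z * pdir v g z"
  by (rule trans[OF pdir_eqI[OF DERIV_mult[OF has_real_derivative_pdir[OF assms(1)]
        has_real_derivative_pdir[OF assms(2)]]]]) (simp add: mult.commute)

lemma pdir_differentiable_divide [simp]:
  assumes "pdir_differentiable v f z" "pdir_differentiable v g z" "g z \<noteq> 0"
  shows "pdir_differentiable v (\<lambda>w. f w / g w) z"
  by (rule pdir_differentiableI, rule DERIV_divide[OF has_real_derivative_pdir[OF assms(1)]
        has_real_derivative_pdir[OF assms(2)]]) (simp add: assms)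

lemma pdir_differentiable_sum [simp]:
  "(\<And>i. i \<in> A \<Longrightarrow> pdir_differentiable v (f i) z) \<Longrightarrow> pdir_differentiable v (\<lambda>w. \<Sum>i\<in>A. f i w) z"
  by (rule pdir_differentiableI, rule DERIV_sum[OF has_real_derivative_pdir])

lemma pdir_sum [simp]:
  "(\<And>i. i \<in> A \<Longrightarrow> pdir_differentiable v (f i) z) \<Longrightarrow>
    pdir v (\<lambda>w. \<Sum>i\<in>A. f i w) z = (\<Sum>i\<in>A. pdir v (f i) z)"
  by (rule pdir_eqI, rule DERIV_sum[OF has_real_derivative_pdir])

lemma pdir_differentiable_if_zero [simp]:
  "pdir_differentiable v g z \<Longrightarrow> pdir_differentiable v (\<lambda>w. if c then g w else 0) z"
  by (cases c) simp_all

lemma pdir_if_zero [simp]: "pdir v (\<lambda>w. if c then g w else 0) z = (if c then pdir v g z else 0)"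
  by (cases c) simp_all

lemma pdir_cong_open:
  assumes "open S" "z \<in> S" "\<And>w. w \<in> S \<Longrightarrow> f w = g w"
  shows "pdir v f z = pdir v g z"
proof -
  have "open ((\<lambda>s::real. z + s *\<^sub>R v) -` S)"
    by (intro open_vimage assms continuous_intros)
  then have "\<forall>\<^sub>F s in nhds 0. z + s *\<^sub>R v \<in> S"
    using eventually_nhds_in_open assms(2) by fastforce
  then have "\<forall>\<^sub>F s in nhds 0. f (z + s *\<^sub>R v) = g (z + s *\<^sub>R v)"
    by eventually_elim (simp add: assms(3))
  then show ?thesis unfolding pdir_def by (rule deriv_cong_ev) simp
qed

lemma has_real_derivative_pdir_along_line:
  assumes "pdir_differentiable v g p" "p = q + x *\<^sub>R v" "\<And>s. F s = g (q + s *\<^sub>R v)"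
  shows "(F has_real_derivative pdir v g p) (at x)"
proof -
  have "((\<lambda>s. F (s + x)) has_real_derivative pdir v g p) (at 0)"
    using has_real_derivative_pdir[OF assms(1)] by (simp add: assms(2,3) algebra_simps)
  then show ?thesis using DERIV_shift[of F _ 0 x] by simp
qed

lemma second_difference_mvt:
  fixes f :: "'a::real_normed_vector \<Rightarrow> real"
  assumes h: "h > 0"
    and diff: "\<And>x y. 0 \<le> x \<Longrightarrow> x \<le> h \<Longrightarrow> 0 \<le> y \<Longrightarrow> y \<le> h \<Longrightarrow>
        pdir_differentiable a f (z + x *\<^sub>R a + y *\<^sub>R b) \<and>
        pdir_differentiable b (pdir a f) (z + x *\<^sub>R a + y *\<^sub>R b)"
  obtains \<xi> \<eta> where "0 < \<xi>" "\<xi> < h" "0 < \<eta>" "\<eta> < h"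
    "f (z + h *\<^sub>R a + h *\<^sub>R b) - f (z + h *\<^sub>R a) - f (z + h *\<^sub>R b) + f z
       = h * h * pdir b (pdir a f) (z + \<xi> *\<^sub>R a + \<eta> *\<^sub>R b)"
proof -
  define \<phi> where "\<phi> x = f (z + x *\<^sub>R a + h *\<^sub>R b) - f (z + x *\<^sub>R a)" for x
  have "(\<phi> has_real_derivative pdir a f (z + x *\<^sub>R a + h *\<^sub>R b) - pdir a f (z + x *\<^sub>R a)) (at x)"
    if "0 \<le> x" "x \<le> h" for x
    unfolding \<phi>_def
    by (intro DERIV_diff has_real_derivative_pdir_along_line[where q = "z + h *\<^sub>R b"]
        has_real_derivative_pdir_along_line[where q = z])
      (use diff[of x h] diff[of x 0] that h in \<open>auto simp: algebra_simps\<close>)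
  from MVT2[OF h this] obtain \<xi> where \<xi>: "0 < \<xi>" "\<xi> < h"
    "\<phi> h - \<phi> 0 = h * (pdir a f (z + \<xi> *\<^sub>R a + h *\<^sub>R b) - pdir a f (z + \<xi> *\<^sub>R a))"
    by auto
  define \<psi> where "\<psi> y = pdir a f (z + \<xi> *\<^sub>R a + y *\<^sub>R b)" for y
  have "(\<psi> has_real_derivative pdir b (pdir a f) (z + \<xi> *\<^sub>R a + y *\<^sub>R b)) (at y)"
    if "0 \<le> y" "y \<le> h" for y
    unfolding \<psi>_def
    by (rule has_real_derivative_pdir_along_line[where q = "z + \<xi> *\<^sub>R a"])
      (use diff[of \<xi> y] that \<xi> in \<open>auto simp: algebra_simps\<close>)
  from MVT2[OF h this] obtain \<eta> where \<eta>: "0 < \<eta>" "\<eta> < h"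
    "\<psi> h - \<psi> 0 = h * pdir b (pdir a f) (z + \<xi> *\<^sub>R a + \<eta> *\<^sub>R b)"
    by auto
  have "f (z + h *\<^sub>R a + h *\<^sub>R b) - f (z + h *\<^sub>R a) - f (z + h *\<^sub>R b) + f z = \<phi> h - \<phi> 0"
    unfolding \<phi>_def by simp
  also have "\<dots> = h * (\<psi> h - \<psi> 0)" using \<xi>(3) unfolding \<psi>_def by simp
  also have "\<dots> = h * h * pdir b (pdir a f) (z + \<xi> *\<^sub>R a + \<eta> *\<^sub>R b)" using \<eta>(3) by simp
  finally show ?thesis using \<xi> \<eta> that by blast
qed

lemma dist_add_scaleR_le:
  assumes "0 \<le> x" "x \<le> h" "0 \<le> y" "y \<le> h"
  shows "dist (z + x *\<^sub>R a + y *\<^sub>R b) z \<le> h * (norm a + norm b)"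
proof -
  have "dist (z + x *\<^sub>R a + y *\<^sub>R b) z = norm (x *\<^sub>R a + y *\<^sub>R b)"
    by (simp add: dist_norm)
  also have "\<dots> \<le> norm (x *\<^sub>R a) + norm (y *\<^sub>R b)" by (rule norm_triangle_ineq)
  also have "\<dots> = x * norm a + y * norm b" using assms by simp
  also have "\<dots> \<le> h * norm a + h * norm b"
    using assms by (intro add_mono mult_right_mono) auto
  finally show ?thesis by (simp add: distrib_left)
qed

lemma mixed_pdirs_agree_nearby:
  fixes f :: "'a::real_normed_vector \<Rightarrow> real"
  assumes h: "h > 0" and ball: "cball z (h * (norm a + norm b)) \<subseteq> S"
    and diff: "\<And>w. w \<in> S \<Longrightarrow> pdir_differentiable a f w \<and> pdir_differentiable b f w \<and>
        pdir_differentiable b (pdir a f) w \<and> pdir_differentiable a (pdir b f) w"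
  obtains p p' where "dist p z \<le> h * (norm a + norm b)" "dist p' z \<le> h * (norm a + norm b)"
    "pdir b (pdir a f) p = pdir a (pdir b f) p'"
proof -
  have near: "dist (z + x *\<^sub>R a' + y *\<^sub>R b') z \<le> h * (norm a + norm b)"
    if "0 \<le> x" "x \<le> h" "0 \<le> y" "y \<le> h" "{a', b'} = {a, b}" for x y a' b'
  proof -
    have "dist (z + x *\<^sub>R a' + y *\<^sub>R b') z \<le> h * (norm a' + norm b')"
      using that by (intro dist_add_scaleR_le)
    also have "\<dots> = h * (norm a + norm b)" using that(5) by (auto simp: doubleton_eq_iff)
    finally show ?thesis .
  qed
  then have in_S: "z + x *\<^sub>R a' + y *\<^sub>R b' \<in> S"
    if "0 \<le> x" "x \<le> h" "0 \<le> y" "y \<le> h" "{a', b'} = {a, b}" for x y a' b'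
    using that ball by (auto simp: dist_commute subset_iff)
  obtain \<xi> \<eta> where 1: "0 < \<xi>" "\<xi> < h" "0 < \<eta>" "\<eta> < h"
     "f (z + h *\<^sub>R a + h *\<^sub>R b) - f (z + h *\<^sub>R a) - f (z + h *\<^sub>R b) + f z
       = h * h * pdir b (pdir a f) (z + \<xi> *\<^sub>R a + \<eta> *\<^sub>R b)"
    using second_difference_mvt[of h a f z b] h diff in_S by blast
  obtain \<xi>' \<eta>' where 2: "0 < \<xi>'" "\<xi>' < h" "0 < \<eta>'" "\<eta>' < h"
     "f (z + h *\<^sub>R b + h *\<^sub>R a) - f (z + h *\<^sub>R b) - f (z + h *\<^sub>R a) + f z
       = h * h * pdir a (pdir b f) (z + \<xi>' *\<^sub>R b + \<eta>' *\<^sub>R a)"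
    using second_difference_mvt[of h b f z a] h diff in_S by blast
  have "f (z + h *\<^sub>R b + h *\<^sub>R a) = f (z + h *\<^sub>R a + h *\<^sub>R b)" by (simp add: algebra_simps)
  then have "h * h * pdir b (pdir a f) (z + \<xi> *\<^sub>R a + \<eta> *\<^sub>R b)
      = h * h * pdir a (pdir b f) (z + \<xi>' *\<^sub>R b + \<eta>' *\<^sub>R a)"
    using 1(5) 2(5) by linarith
  then show ?thesis
    using that near[of \<xi> \<eta> a b] near[of \<xi>' \<eta>' b a] 1 2 h by auto
qed

text \<open>Schwarz's theorem: the mixed derivatives in both orders agree at points arbitrarily close
  to \<open>z\<close>, so continuity forces equality at \<open>z\<close>.\<close>
lemma pdir_pdir_commute:
  fixes f :: "'a::real_normed_vector \<Rightarrow> real"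
  assumes "open S" "z \<in> S"
    and diff: "\<And>w. w \<in> S \<Longrightarrow> pdir_differentiable a f w \<and> pdir_differentiable b f w \<and>
        pdir_differentiable b (pdir a f) w \<and> pdir_differentiable a (pdir b f) w"
    and cont_P: "continuous_on S (pdir b (pdir a f))"
    and cont_Q: "continuous_on S (pdir a (pdir b f))"
  shows "pdir b (pdir a f) z = pdir a (pdir b f) z"
proof (rule ccontr)
  define P where "P = pdir b (pdir a f)"
  define Q where "Q = pdir a (pdir b f)"
  assume "pdir b (pdir a f) z \<noteq> pdir a (pdir b f) z"
  then have "P z \<noteq> Q z" by (simp add: P_def Q_def)
  define e where "e = \<bar>P z - Q z\<bar> / 2"
  have e: "e > 0" using \<open>P z \<noteq> Q z\<close> by (simp add: e_def)
  obtain r where r: "r > 0" "ball z r \<subseteq> S" using assms(1,2) open_contains_ball by blast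
  obtain d1 where d1: "d1 > 0"
      "\<And>w. w \<in> S \<Longrightarrow> dist w z < d1 \<Longrightarrow> dist (P w) (P z) < e"
    using cont_P assms(2) e unfolding continuous_on_iff P_def by metis
  obtain d2 where d2: "d2 > 0"
      "\<And>w. w \<in> S \<Longrightarrow> dist w z < d2 \<Longrightarrow> dist (Q w) (Q z) < e"
    using cont_Q assms(2) e unfolding continuous_on_iff Q_def by metis
  define m where "m = min r (min d1 d2) / 2"
  define h where "h = m / (norm a + norm b + 1)"
  have "m > 0" using r d1 d2 by (simp add: m_def)
  moreover have "norm a + norm b + 1 > 0" by (simp add: add_nonneg_pos)
  ultimately have h: "h > 0" "h * (norm a + norm b + 1) = m" by (simp_all add: h_def)
  then have radius: "h * (norm a + norm b) \<le> m" by (simp add: distrib_left)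
  have ball_m: "cball z m \<subseteq> S" using r d1 d2 by (intro order.trans[OF _ r(2)]) (auto simp: m_def)
  then have "cball z (h * (norm a + norm b)) \<subseteq> S" using subset_cball[OF radius] by blast
  then obtain p p' where p: "dist p z \<le> m" "dist p' z \<le> m" "P p = Q p'"
    using mixed_pdirs_agree_nearby[OF h(1) _ diff] radius unfolding P_def Q_def by force
  then have "p \<in> S" "p' \<in> S" using ball_m by (auto simp: dist_commute)
  moreover have "m < d1" "m < d2" using r d1 d2 by (auto simp: m_def)
  ultimately have "dist (P p) (P z) < e" "dist (Q p') (Q z) < e"
    using d1(2)[of p] d2(2)[of p'] p by auto
  then have "\<bar>P z - Q z\<bar> < 2 * e" using p(3) unfolding dist_real_def by linarith
  then show False by (simp add: e_def)
qed

lemma smooth_on_pdir_differentiable: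
  assumes "smooth_on S g" "z \<in> S" "v \<in> Basis"
  shows "pdir_differentiable v g z"
  using assms(1)[unfolded smooth_on_def, rule_format, of "[]"] assms(2,3)
  unfolding pdir_differentiable_def by simp

lemma smooth_on_continuous_on: "smooth_on S g \<Longrightarrow> continuous_on S g"
  unfolding smooth_on_def by (drule spec[of _ "[]"]) simp

lemma smooth_on_pdir:
  assumes "smooth_on S g" "b \<in> Basis"
  shows "smooth_on S (pdir b g)"
  unfolding smooth_on_def
proof (intro allI impI)
  fix vs :: "'a list" assume "set vs \<subseteq> Basis"
  then have "set (vs @ [b]) \<subseteq> Basis" using assms(2) by simp
  then show "continuous_on S (foldr pdir vs (pdir b g)) \<and>
      (\<forall>z\<in>S. \<forall>v\<in>Basis. (\<lambda>s. foldr pdir vs (pdir b g) (z + s *\<^sub>R v)) differentiable at 0)"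
    using assms(1)[unfolded smooth_on_def, rule_format, of "vs @ [b]"] by simp
qed

lemma smooth_on_pdir_commute:
  assumes "open S" "smooth_on S g" "z \<in> S" "a \<in> Basis" "b \<in> Basis"
  shows "pdir b (pdir a g) z = pdir a (pdir b g) z"
proof (rule pdir_pdir_commute[OF assms(1,3)])
  show "continuous_on S (pdir b (pdir a g))" "continuous_on S (pdir a (pdir b g))"
    using assms by (auto intro: smooth_on_continuous_on smooth_on_pdir)
  show "pdir_differentiable a g w \<and> pdir_differentiable b g w \<and>
      pdir_differentiable b (pdir a g) w \<and> pdir_differentiable a (pdir b g) w" if "w \<in> S" for w
    using assms that by (auto intro: smooth_on_pdir_differentiable smooth_on_pdir)
qed

lemma time_in_Basis [simp]: "((1::real), (0::real^'n)) \<in> Basis"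
  by (simp add: Basis_prod_def)

lemma axis_in_Basis [simp]: "((0::real), (axis j 1::real^'n)) \<in> Basis"
  by (auto simp: Basis_prod_def Basis_vec_def)

lemma smooth_on_dx_dt_commute:
  "open S \<Longrightarrow> smooth_on S g \<Longrightarrow> z \<in> S \<Longrightarrow> dx i (dt g) z = dt (dx i g) z"
  unfolding dt_def[abs_def] dx_def[abs_def] by (rule smooth_on_pdir_commute) simp_all

lemma smooth_on_dx_dx_commute:
  "open S \<Longrightarrow> smooth_on S g \<Longrightarrow> z \<in> S \<Longrightarrow> dx i (dx j g) z = dx j (dx i g) z"
  unfolding dx_def[abs_def] by (rule smooth_on_pdir_commute) simp_all

definition material_deriv :: "(real \<times> (real^'n) \<Rightarrow> real^'n) \<Rightarrow>
    (real \<times> (real^'n) \<Rightarrow> real) \<Rightarrow> real \<times> (real^'n) \<Rightarrow> real" where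
  "material_deriv u q z = dt q z + (\<Sum>j\<in>UNIV. u z $ j * dx j q z)"

lemma material_deriv_const [simp]: "material_deriv u (\<lambda>w. c) z = 0"
  by (simp add: material_deriv_def dt_def dx_def)

lemma material_deriv_add [simp]:
  "\<forall>v\<in>Basis. pdir_differentiable v f z \<Longrightarrow> \<forall>v\<in>Basis. pdir_differentiable v g z \<Longrightarrow>
    material_deriv u (\<lambda>w. f w + g w) z = material_deriv u f z + material_deriv u g z"
  by (simp add: material_deriv_def dt_def dx_def distrib_left sum.distrib)

lemma material_deriv_mult [simp]:
  "\<forall>v\<in>Basis. pdir_differentiable v f z \<Longrightarrow> \<forall>v\<in>Basis. pdir_differentiable v g z \<Longrightarrow>
    material_deriv u (\<lambda>w. f w * g w) z = material_deriv u f z * g z + f z * material_deriv u g z"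
  by (simp add: material_deriv_def dt_def dx_def algebra_simps sum.distrib sum_distrib_left
      sum_distrib_right)

lemma material_deriv_sum [simp]:
  "(\<And>i. i \<in> A \<Longrightarrow> \<forall>v\<in>Basis. pdir_differentiable v (f i) z) \<Longrightarrow>
    material_deriv u (\<lambda>w. \<Sum>i\<in>A. f i w) z = (\<Sum>i\<in>A. material_deriv u (f i) z)"
  by (simp add: material_deriv_def dt_def dx_def sum.distrib sum_distrib_left sum.swap[of _ A])

lemma flux_divergence_eq_material_deriv:
  assumes "\<forall>v\<in>Basis. pdir_differentiable v \<rho> z" "\<forall>v\<in>Basis. pdir_differentiable v q z"
    and "\<And>j. \<forall>v\<in>Basis. pdir_differentiable v (\<lambda>w. u w $ j) z"
  shows "dt (\<lambda>w. \<rho> w * q w) z + (\<Sum>j\<in>UNIV. dx j (\<lambda>w. \<rho> w * q w * u w $ j) z)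
    = \<rho> z * material_deriv u q z + q z * (dt \<rho> z + (\<Sum>j\<in>UNIV. dx j (\<lambda>w. \<rho> w * u w $ j) z))"
  using assms by (simp add: material_deriv_def dt_def dx_def algebra_simps sum.distrib
      sum_distrib_left)

lemma material_deriv_divg:
  assumes "open S" "\<And>j. smooth_on S (\<lambda>w. u w $ j)" "z \<in> S"
  shows "material_deriv u (divg u) z
    = (\<Sum>i\<in>UNIV. dx i (material_deriv u (\<lambda>w. u w $ i)) z)
      - (\<Sum>i\<in>UNIV. \<Sum>j\<in>UNIV. dx j (\<lambda>w. u w $ i) z * dx i (\<lambda>w. u w $ j) z)"
proof -
  have [simp]: "pdir_differentiable v (\<lambda>w. u w $ i) w" if "w \<in> S" "v \<in> Basis" for v w i
    using assms(2) that by (rule smooth_on_pdir_differentiable)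
  have [simp]: "pdir_differentiable v (pdir b (\<lambda>w. u w $ i)) w"
    if "w \<in> S" "v \<in> Basis" "b \<in> Basis" for v b w i
    using assms(2) that by (auto intro: smooth_on_pdir_differentiable smooth_on_pdir)
  have comm: "dx i (dx j (\<lambda>w. u w $ i)) z = dx j (dx i (\<lambda>w. u w $ i)) z" for i j
    using assms by (rule smooth_on_dx_dx_commute)
  have dx_transport: "dx i (material_deriv u (\<lambda>w. u w $ i)) z
      = dt (dx i (\<lambda>w. u w $ i)) z + (\<Sum>j\<in>UNIV. dx j (\<lambda>w. u w $ i) z * dx i (\<lambda>w. u w $ j) z)
        + (\<Sum>j\<in>UNIV. u z $ j * dx j (dx i (\<lambda>w. u w $ i)) z)" for i
  proof -
    have "dx i (material_deriv u (\<lambda>w. u w $ i)) z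
        = dx i (dt (\<lambda>w. u w $ i)) z + (\<Sum>j\<in>UNIV. dx j (\<lambda>w. u w $ i) z * dx i (\<lambda>w. u w $ j) z
          + u z $ j * dx i (dx j (\<lambda>w. u w $ i)) z)"
      using assms(3)
      by (simp add: material_deriv_def[abs_def] dt_def[abs_def] dx_def[abs_def] mult.commute)
    also have "\<dots> = dt (dx i (\<lambda>w. u w $ i)) z
        + (\<Sum>j\<in>UNIV. dx j (\<lambda>w. u w $ i) z * dx i (\<lambda>w. u w $ j) z
          + u z $ j * dx j (dx i (\<lambda>w. u w $ i)) z)"
      unfolding smooth_on_dx_dt_commute[OF assms(1,2,3)] comm[of i] ..
    finally show ?thesis by (simp add: sum.distrib add.assoc)
  qed
  have dt_divg: "dt (divg u) z = (\<Sum>i\<in>UNIV. dt (dx i (\<lambda>w. u w $ i)) z)"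
    using assms(3) by (simp add: divg_def[abs_def] dt_def[abs_def] dx_def[abs_def])
  have dx_divg: "dx j (divg u) z = (\<Sum>i\<in>UNIV. dx j (dx i (\<lambda>w. u w $ i)) z)" for j
    using assms(3) by (simp add: divg_def[abs_def] dx_def[abs_def])
  have "(\<Sum>i\<in>UNIV. dx i (material_deriv u (\<lambda>w. u w $ i)) z)
      = (\<Sum>i\<in>UNIV. dt (dx i (\<lambda>w. u w $ i)) z)
        + (\<Sum>i\<in>UNIV. \<Sum>j\<in>UNIV. dx j (\<lambda>w. u w $ i) z * dx i (\<lambda>w. u w $ j) z)
        + (\<Sum>i\<in>UNIV. \<Sum>j\<in>UNIV. u z $ j * dx j (dx i (\<lambda>w. u w $ i)) z)"
    by (simp add: dx_transport sum.distrib)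
  also have "(\<Sum>i\<in>UNIV. \<Sum>j\<in>UNIV. u z $ j * dx j (dx i (\<lambda>w. u w $ i)) z)
      = (\<Sum>j\<in>UNIV. u z $ j * dx j (divg u) z)"
    unfolding dx_divg sum_distrib_left by (rule sum.swap)
  finally show ?thesis by (simp add: material_deriv_def[of u "divg u"] dt_divg)
qed

lemma norm_vec_power2: "(norm (x :: real^'n))\<^sup>2 = (\<Sum>i\<in>UNIV. x $ i * x $ i)"
  by (simp add: power2_norm_eq_inner inner_vec_def)

locale pressureless_igr_flow =
  fixes \<rho> Sig :: "real \<times> (real^'n) \<Rightarrow> real" and u :: "real \<times> (real^'n) \<Rightarrow> real^'n"
    and S :: "(real \<times> (real^'n)) set" and \<alpha> :: real
  assumes open_S: "open S" and alpha_pos: "\<alpha> > 0"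
    and smooth_rho: "smooth_on S \<rho>" and smooth_u: "\<And>j. smooth_on S (\<lambda>w. u w $ j)"
    and smooth_Sig: "smooth_on S Sig"
    and rho_pos: "\<And>z. z \<in> S \<Longrightarrow> \<rho> z > 0"
    and mass: "\<And>z. z \<in> S \<Longrightarrow> dt \<rho> z + (\<Sum>j\<in>UNIV. dx j (\<lambda>w. \<rho> w * u w $ j) z) = 0"
    and momentum: "\<And>z i. z \<in> S \<Longrightarrow> dt (\<lambda>w. \<rho> w * u w $ i) z
        + (\<Sum>j\<in>UNIV. dx j (\<lambda>w. \<rho> w * u w $ i * u w $ j + (if i = j then Sig w else 0)) z) = 0"
    and igr: "\<And>z. z \<in> S \<Longrightarrow> Sig z / \<rho> z - \<alpha> * (\<Sum>j\<in>UNIV. dx j (\<lambda>w. dx j Sig w / \<rho> w) z)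
        = \<alpha> * ((\<Sum>j\<in>UNIV. dx j (\<lambda>w. u w $ j) z)\<^sup>2
                + (\<Sum>i\<in>UNIV. \<Sum>j\<in>UNIV. dx j (\<lambda>w. u w $ i) z * dx i (\<lambda>w. u w $ j) z))"
begin

lemma rho_nonzero [simp]: "z \<in> S \<Longrightarrow> \<rho> z \<noteq> 0"
  using rho_pos[of z] by simp

lemma pdir_differentiable_fields [simp]:
  assumes "w \<in> S" "v \<in> Basis"
  shows "pdir_differentiable v \<rho> w" "pdir_differentiable v (\<lambda>w. u w $ i) w"
    "pdir_differentiable v Sig w"
  using assms smooth_on_pdir_differentiable smooth_rho smooth_u smooth_Sig by blast+

lemma pdir_differentiable_pdir_fields [simp]:
  assumes "w \<in> S" "v \<in> Basis" "b \<in> Basis"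
  shows "pdir_differentiable v (pdir b (\<lambda>w. u w $ i)) w" "pdir_differentiable v (pdir b Sig) w"
  using assms smooth_on_pdir_differentiable smooth_on_pdir smooth_u smooth_Sig
  by blast+

lemma pdir_differentiable_divg [simp]:
  "w \<in> S \<Longrightarrow> v \<in> Basis \<Longrightarrow> pdir_differentiable v (divg u) w"
  by (simp add: divg_def[abs_def] dx_def)

lemma momentum_convective:
  assumes "z \<in> S"
  shows "material_deriv u (\<lambda>w. u w $ i) z = - dx i Sig z / \<rho> z"
proof -
  have "0 = dt (\<lambda>w. \<rho> w * u w $ i) z + (\<Sum>j\<in>UNIV. dx j (\<lambda>w. \<rho> w * u w $ i * u w $ j) z)
      + dx i Sig z"
    using momentum[OF assms, of i] assms by (simp add: dt_def dx_def sum.distrib)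
  also have "\<dots> = \<rho> z * material_deriv u (\<lambda>w. u w $ i) z + dx i Sig z"
    using flux_divergence_eq_material_deriv[of \<rho> z "\<lambda>w. u w $ i" u] mass[OF assms] assms
    by simp
  finally show ?thesis using assms by (simp add: field_simps)
qed

lemma divergence_convective:
  assumes "z \<in> S"
  shows "material_deriv u (divg u) z = (divg u z)\<^sup>2 - Sig z / (\<alpha> * \<rho> z)"
proof -
  let ?T = "\<Sum>i\<in>UNIV. \<Sum>j\<in>UNIV. dx j (\<lambda>w. u w $ i) z * dx i (\<lambda>w. u w $ j) z"
  let ?Q = "\<Sum>i\<in>UNIV. dx i (\<lambda>w. dx i Sig w / \<rho> w) z"
  have "dx i (material_deriv u (\<lambda>w. u w $ i)) z = - dx i (\<lambda>w. dx i Sig w / \<rho> w) z" for i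
  proof -
    have "dx i (material_deriv u (\<lambda>w. u w $ i)) z = dx i (\<lambda>w. - (dx i Sig w / \<rho> w)) z"
      unfolding dx_def
      by (rule pdir_cong_open[OF open_S assms]) (simp add: momentum_convective dx_def)
    also have "\<dots> = - dx i (\<lambda>w. dx i Sig w / \<rho> w) z"
      using assms by (simp add: dx_def)
    finally show ?thesis .
  qed
  then have "material_deriv u (divg u) z = - ?Q - ?T"
    using material_deriv_divg[OF open_S smooth_u assms] by (simp add: sum_negf)
  moreover have "?Q = Sig z / (\<alpha> * \<rho> z) - (divg u z)\<^sup>2 - ?T"
    using igr[OF assms] alpha_pos assms by (simp add: divg_def field_simps)
  ultimately show ?thesis by simp
qed

lemma kinetic_energy_balance:
  assumes "z \<in> S"
  defines "K \<equiv> \<lambda>w. 1/2 * \<rho> w * ((norm (u w))\<^sup>2 + \<alpha> * (divg u w)\<^sup>2)"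
  shows "dt K z + (\<Sum>j\<in>UNIV. dx j (\<lambda>w. (K w + Sig w) * u w $ j) z) = \<alpha> * \<rho> z * divg u z ^ 3"
proof -
  define q where "q w = 1/2 * ((\<Sum>i\<in>UNIV. u w $ i * u w $ i) + \<alpha> * (divg u w * divg u w))" for w
  have K_eq: "K = (\<lambda>w. \<rho> w * q w)"
    unfolding K_def q_def norm_vec_power2 by (simp add: power2_eq_square)
  have [simp]: "pdir_differentiable v q z" if "v \<in> Basis" for v
    using assms(1) that by (simp add: q_def[abs_def])
  have flux: "(\<Sum>j\<in>UNIV. dx j (\<lambda>w. (K w + Sig w) * u w $ j) z)
      = (\<Sum>j\<in>UNIV. dx j (\<lambda>w. \<rho> w * q w * u w $ j) z) + (\<Sum>j\<in>UNIV. u z $ j * dx j Sig z)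
        + Sig z * divg u z"
    using assms(1) by (simp add: K_eq dx_def divg_def distrib_left distrib_right sum.distrib
        sum_distrib_left mult.commute)
  have transport: "dt K z + (\<Sum>j\<in>UNIV. dx j (\<lambda>w. \<rho> w * q w * u w $ j) z)
      = \<rho> z * material_deriv u q z"
    using flux_divergence_eq_material_deriv[of \<rho> z q u] mass[OF assms(1)] assms(1)
    by (simp add: K_eq)
  have md_q: "material_deriv u q z = (\<Sum>i\<in>UNIV. u z $ i * material_deriv u (\<lambda>w. u w $ i) z)
      + \<alpha> * divg u z * material_deriv u (divg u) z"
    using assms(1) by (simp add: q_def[abs_def] del: times_divide_eq_left)
      (simp add: algebra_simps sum.distrib sum_distrib_left)
  have velocity_part: "\<rho> z * (\<Sum>i\<in>UNIV. u z $ i * material_deriv u (\<lambda>w. u w $ i) z)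
      = - (\<Sum>i\<in>UNIV. u z $ i * dx i Sig z)"
    using assms(1) by (simp add: momentum_convective sum_distrib_left sum_negf)
  have divergence_part: "\<rho> z * (\<alpha> * divg u z * material_deriv u (divg u) z)
      = \<alpha> * \<rho> z * divg u z ^ 3 - Sig z * divg u z"
    using assms(1) alpha_pos
    by (simp add: divergence_convective field_simps power2_eq_square power3_eq_cube)
  have "\<rho> z * material_deriv u q z = - (\<Sum>i\<in>UNIV. u z $ i * dx i Sig z)
      + \<alpha> * \<rho> z * divg u z ^ 3 - Sig z * divg u z"
    unfolding md_q distrib_left velocity_part divergence_part by simp
  then show ?thesis using flux transport by simp
qed

end

theorem mainTheorem9:
  fixes \<rho> Sig :: "real \<times> (real^'n) \<Rightarrow> real"
    and u :: "real \<times> (real^'n) \<Rightarrow> real^'n"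
    and I :: "real set" and \<Omega> :: "(real^'n) set" and \<alpha> :: real
  assumes "open I" and "open \<Omega>"
    and "\<alpha> > 0"
    and smooth_rho: "smooth_on (I \<times> \<Omega>) \<rho>"
    and smooth_u: "\<forall>j. smooth_on (I \<times> \<Omega>) (\<lambda>w. u w $ j)"
    and smooth_Sig: "smooth_on (I \<times> \<Omega>) Sig"
    and pos: "\<forall>z\<in>I \<times> \<Omega>. \<rho> z > 0"
    and mass: "\<forall>z\<in>I \<times> \<Omega>. dt \<rho> z + (\<Sum>j\<in>UNIV. dx j (\<lambda>w. \<rho> w * u w $ j) z) = 0"
    and momentum: "\<forall>z\<in>I \<times> \<Omega>. \<forall>i. dt (\<lambda>w. \<rho> w * u w $ i) z
        + (\<Sum>j\<in>UNIV. dx j (\<lambda>w. \<rho> w * u w $ i * u w $ j + (if i = j then Sig w else 0)) z) = 0"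
    and igr: "\<forall>z\<in>I \<times> \<Omega>. Sig z / \<rho> z - \<alpha> * (\<Sum>j\<in>UNIV. dx j (\<lambda>w. dx j Sig w / \<rho> w) z)
        = \<alpha> * ((\<Sum>j\<in>UNIV. dx j (\<lambda>w. u w $ j) z)\<^sup>2
                + (\<Sum>i\<in>UNIV. \<Sum>j\<in>UNIV. dx j (\<lambda>w. u w $ i) z * dx i (\<lambda>w. u w $ j) z))"
  shows "\<forall>z\<in>I \<times> \<Omega>.
     (let K = (\<lambda>w. 1/2 * \<rho> w * ((norm (u w))\<^sup>2 + \<alpha> * (divg u w)\<^sup>2)) in
        dt K z + (\<Sum>j\<in>UNIV. dx j (\<lambda>w. (K w + Sig w) * u w $ j) z)
          = \<alpha> * \<rho> z * (divg u z) ^ 3)"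
proof -
  interpret pressureless_igr_flow \<rho> Sig u "I \<times> \<Omega>" \<alpha>
    using assms by unfold_locales (auto intro: open_Times)
  show ?thesis using kinetic_energy_balance by (simp add: Let_def)
qed

end
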